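(* Let $\vec r:\mathbb{Z}\to\mathbb{R}^3$ be a discrete centroaffine space curve with invariants $\kappa_n,\bar\kappa_n,\tau_n$, let $(\beta_n)$ be nonzero reals and $\vec r'_n=\beta_n\vec r_n$ with torsions $\tau'_n$. If $\tau_n=0$ and $\tau'_n=0$ for all $n$, then for all $n$ $$\frac{1}{\beta_{n+2}}=\kappa_n\frac{1}{\beta_{n-1}}-(\kappa_n+\bar\kappa_n)\frac{1}{\beta_n}+(1+\bar\kappa_n)\frac{1}{\beta_{n+1}},$$ equivalently $\frac{1}{\beta_{n+2}}-\frac{1}{\beta_{n+1}}=\bar\kappa_n\Big(\frac{1}{\beta_{n+1}}-\frac{1}{\beta_n}\Big)-\kappa_n\Big(\frac{1}{\beta_n}-\frac{1}{\beta_{n-1}}\Big)$.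
   Context: A discrete centroaffine space curve is a map $\vec r:\mathbb{Z}\to\mathbb{R}^3$ with $[\vec r_{k-1},\vec r_k,\vec r_{k+1}]\ne0$ for all $k$, where $\vec r_k=\vec r(k)$, $[\cdot,\cdot,\cdot]$ is the $3\times3$ determinant and $\vec t_k=\vec r_{k+1}-\vec r_k$. With $D_k=[\vec r_{k-1},\vec r_k,\vec r_{k+1}]$: $\kappa_k=\frac{[\vec r_k,\vec r_{k+1},\vec r_{k+2}]}{D_k}$, $\bar\kappa_k=\frac{[\vec r_{k+1},\vec t_{k-1},\vec t_{k+1}]}{D_k}$, $\tau_k=\frac{[\vec t_{k-1},\vec t_k,\vec t_{k+1}]}{D_k}$ (first/second centroaffine curvature and centroaffine torsion). *)

theory Defs
  imports "HOL-Analysis.Analysis"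
begin

definition bracket3 :: "real^3 \<Rightarrow> real^3 \<Rightarrow> real^3 \<Rightarrow> real" where
  "bracket3 a b c = det (vector [a, b, c] :: real^3^3)"

definition tvec :: "(int \<Rightarrow> real^3) \<Rightarrow> int \<Rightarrow> real^3" where
  "tvec r k = r (k + 1) - r k"

definition Dc :: "(int \<Rightarrow> real^3) \<Rightarrow> int \<Rightarrow> real" where
  "Dc r k = bracket3 (r (k - 1)) (r k) (r (k + 1))"

definition centroaffine_curve :: "(int \<Rightarrow> real^3) \<Rightarrow> bool" where
  "centroaffine_curve r \<longleftrightarrow> (\<forall>k. Dc r k \<noteq> 0)"

definition kappa :: "(int \<Rightarrow> real^3) \<Rightarrow> int \<Rightarrow> real" where
  "kappa r k = bracket3 (r k) (r (k + 1)) (r (k + 2)) / Dc r k"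

definition kappabar :: "(int \<Rightarrow> real^3) \<Rightarrow> int \<Rightarrow> real" where
  "kappabar r k = bracket3 (r (k + 1)) (tvec r (k - 1)) (tvec r (k + 1)) / Dc r k"

definition torsion :: "(int \<Rightarrow> real^3) \<Rightarrow> int \<Rightarrow> real" where
  "torsion r k = bracket3 (tvec r (k - 1)) (tvec r k) (tvec r (k + 1)) / Dc r k"

end

theory Submission
  imports Defs
begin

text \<open>Write P, Q, R, D for the brackets [r(k), r(k+1), r(k+2)], [r(k-1), r(k+1), r(k+2)],
  [r(k-1), r(k), r(k+2)] and [r(k-1), r(k), r(k+1)]. By multilinearity of the bracket,
  D * torsion = P - Q + R - D, kappa = P / D and kappabar = (Q - P) / D; for the rescaled curve
  the same expansion, divided by the four factors beta, becomes
  P / beta(k-1) - Q / beta(k) + R / beta(k+1) - D / beta(k+2). Eliminating R between the two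
  vanishing torsions leaves a linear relation for 1 / beta whose coefficients are kappa and
  kappabar.\<close>

lemma bracket3_expand:
  "bracket3 a b c =
     a$1*b$2*c$3 - a$1*b$3*c$2 - a$2*b$1*c$3 + a$2*b$3*c$1 + a$3*b$1*c$2 - a$3*b$2*c$1"
  unfolding bracket3_def by (simp add: det_3 vector_3)

lemma bracket3_diff_diff_diff:
  "bracket3 (a1 - a0) (a2 - a1) (a3 - a2) =
     bracket3 a1 a2 a3 - bracket3 a0 a2 a3 + bracket3 a0 a1 a3 - bracket3 a0 a1 a2"
  unfolding bracket3_expand by (simp add: algebra_simps)

lemma bracket3_diff_diff:
  "bracket3 a2 (a1 - a0) (a3 - a2) = bracket3 a0 a2 a3 - bracket3 a1 a2 a3"
  unfolding bracket3_expand by (simp add: algebra_simps)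

lemma bracket3_scaleR:
  "bracket3 (x *\<^sub>R a) (y *\<^sub>R b) (z *\<^sub>R c) = x * y * z * bracket3 a b c"
  unfolding bracket3_expand by (simp add: algebra_simps)

lemma torsion_eq:
  "torsion r k =
     (bracket3 (r k) (r (k + 1)) (r (k + 2)) - bracket3 (r (k - 1)) (r (k + 1)) (r (k + 2))
      + bracket3 (r (k - 1)) (r k) (r (k + 2)) - Dc r k) / Dc r k"
proof -
  have "k - 1 + 1 = k" "k + 1 + 1 = k + 2" by simp_all
  then show ?thesis
    unfolding torsion_def tvec_def by (simp only: bracket3_diff_diff_diff Dc_def)
qed

lemma kappabar_eq:
  "kappabar r k =
     (bracket3 (r (k - 1)) (r (k + 1)) (r (k + 2)) - bracket3 (r k) (r (k + 1)) (r (k + 2)))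
     / Dc r k"
proof -
  have "k - 1 + 1 = k" "k + 1 + 1 = k + 2" by simp_all
  then show ?thesis
    unfolding kappabar_def tvec_def bracket3_diff_diff by (simp only:)
qed

lemma Dc_scaleR:
  "Dc (\<lambda>k. \<beta> k *\<^sub>R r k) k = \<beta> (k - 1) * \<beta> k * \<beta> (k + 1) * Dc r k"
  unfolding Dc_def by (simp add: bracket3_scaleR)

lemma torsion_scaleR_eq:
  assumes "\<beta> (k - 1) \<noteq> 0" "\<beta> k \<noteq> 0" "\<beta> (k + 1) \<noteq> 0" "\<beta> (k + 2) \<noteq> 0"
  shows "torsion (\<lambda>k. \<beta> k *\<^sub>R r k) k =
     \<beta> (k + 2) *
     (bracket3 (r k) (r (k + 1)) (r (k + 2)) / \<beta> (k - 1)
      - bracket3 (r (k - 1)) (r (k + 1)) (r (k + 2)) / \<beta> k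
      + bracket3 (r (k - 1)) (r k) (r (k + 2)) / \<beta> (k + 1) - Dc r k / \<beta> (k + 2))
     / Dc r k"
  unfolding torsion_eq [of "\<lambda>k. \<beta> k *\<^sub>R r k"] Dc_scaleR using assms
  by (cases "Dc r k = 0") (simp_all add: bracket3_scaleR field_simps)

theorem proposition6p3:
  fixes r :: "int \<Rightarrow> real^3" and \<beta> :: "int \<Rightarrow> real"
  assumes curve: "centroaffine_curve r"
    and beta_nz: "\<forall>n. \<beta> n \<noteq> 0"
    and tau0: "\<forall>n. torsion r n = 0"
    and tau0': "\<forall>n. torsion (\<lambda>k. \<beta> k *\<^sub>R r k) n = 0"
  shows "\<forall>n. 1 / \<beta> (n + 2) =
            kappa r n * (1 / \<beta> (n - 1)) - (kappa r n + kappabar r n) * (1 / \<beta> n)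
            + (1 + kappabar r n) * (1 / \<beta> (n + 1))"
proof
  fix n
  define P Q R D where
    "P = bracket3 (r n) (r (n + 1)) (r (n + 2))" and
    "Q = bracket3 (r (n - 1)) (r (n + 1)) (r (n + 2))" and
    "R = bracket3 (r (n - 1)) (r n) (r (n + 2))" and "D = Dc r n"
  have "D \<noteq> 0" using curve by (simp add: D_def centroaffine_curve_def)
  have R: "R = D + Q - P"
    using torsion_eq [of r n] tau0 \<open>D \<noteq> 0\<close> by (simp add: P_def Q_def R_def D_def)
  have "P / \<beta> (n - 1) - Q / \<beta> n + R / \<beta> (n + 1) - D / \<beta> (n + 2) = 0"
    using torsion_scaleR_eq [of \<beta> n r] tau0' beta_nz \<open>D \<noteq> 0\<close>
    by (simp add: P_def Q_def R_def D_def)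
  then have "1 / \<beta> (n + 2) = (P / \<beta> (n - 1) - Q / \<beta> n + (D + Q - P) / \<beta> (n + 1)) / D"
    using \<open>D \<noteq> 0\<close> unfolding R by (simp add: field_simps)
  also have "\<dots> = kappa r n * (1 / \<beta> (n - 1)) - (kappa r n + kappabar r n) * (1 / \<beta> n)
      + (1 + kappabar r n) * (1 / \<beta> (n + 1))"
    using \<open>D \<noteq> 0\<close> beta_nz
    by (simp add: kappa_def kappabar_eq P_def Q_def D_def field_simps)
  finally show "1 / \<beta> (n + 2) = \<dots>" .
qed

end
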